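(* Let $\Gamma$ be a labeled graph having a connected component with an odd number of edges. Then $c_\Gamma=0$.
   Context: A labeled graph with $V$ vertices and $E$ edges is a map $s:\{1,\ldots,E\}\to\mathcal{P}_2\{1,\ldots,V\}$ (edge $e$ joins the two vertices in $s(e)$; multiple edges allowed). Each edge with $s(e)=\{i,j\}$, $i<j$, is oriented $i\to j$. Define $c_\Gamma:=\sum_{\sigma\in S_V}\prod_{e:\,i\to j}\operatorname{sign}(\sigma(j)-\sigma(i))$, i.e. the sum over all renumberings of the vertices of $(-1)^{\#\text{edges whose orientation is inverted}}$, where after renumbering each edge is oriented from lower to higher label. *)

theory Defs
  imports "HOL-Combinatorics.Permutations"
begin

(* A labeled graph with V vertices and E edges: s e is a 2-element subset of {1..V}
   for each edge e in {1..E}. Multiple edges allowed. *)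
definition labeled_graph :: "nat \<Rightarrow> nat \<Rightarrow> (nat \<Rightarrow> nat set) \<Rightarrow> bool" where
  "labeled_graph V E s \<longleftrightarrow> (\<forall>e\<in>{1..E}. s e \<subseteq> {1..V} \<and> card (s e) = 2)"

definition adjacent :: "nat \<Rightarrow> (nat \<Rightarrow> nat set) \<Rightarrow> nat \<Rightarrow> nat \<Rightarrow> bool" where
  "adjacent E s i j \<longleftrightarrow> (\<exists>e\<in>{1..E}. s e = {i, j})"

definition component :: "nat \<Rightarrow> nat \<Rightarrow> (nat \<Rightarrow> nat set) \<Rightarrow> nat \<Rightarrow> nat set" where
  "component V E s v = {w \<in> {1..V}. (adjacent E s)\<^sup>*\<^sup>* v w}"

definition component_edges :: "nat \<Rightarrow> nat \<Rightarrow> (nat \<Rightarrow> nat set) \<Rightarrow> nat \<Rightarrow> nat set" where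
  "component_edges V E s v = {e \<in> {1..E}. s e \<subseteq> component V E s v}"

definition c_graph :: "nat \<Rightarrow> nat \<Rightarrow> (nat \<Rightarrow> nat set) \<Rightarrow> int" where
  "c_graph V E s = (\<Sum>\<sigma> | \<sigma> permutes {1..V}.
      \<Prod>e\<in>{1..E}. sgn (int (\<sigma> (Max (s e))) - int (\<sigma> (Min (s e)))))"

end

theory Submission
  imports Defs
begin

text \<open>Fix a connected component C with an odd number of edges. Reversing the order of the
labels \<open>\<sigma> ` C\<close> among themselves is an involution on the renumberings \<open>\<sigma>\<close>; it reverses the
orientation of every edge of C and leaves the labels of all other vertices alone, so it
multiplies every summand of \<open>c_graph\<close> by \<open>(-1)^(odd number) = -1\<close>. Hence \<open>c_graph = - c_graph\<close>.\<close>

lemma sum_eq_0_by_sign_reversing_involution: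
  fixes g :: "'a \<Rightarrow> 'b::linordered_ab_group_add"
  assumes "\<And>x. x \<in> P \<Longrightarrow> f x \<in> P" "\<And>x. x \<in> P \<Longrightarrow> f (f x) = x"
    and "\<And>x. x \<in> P \<Longrightarrow> g (f x) = - g x"
  shows "sum g P = 0"
proof -
  have "sum g P = sum (g \<circ> f) P"
    by (rule sum.reindex_bij_witness[of P f f]) (use assms(1,2) in auto)
  also have "\<dots> = - sum g P"
    using assms(3) by (simp add: sum_negf)
  finally show ?thesis by simp
qed

lemma finite_order_reversing_involution:
  fixes T :: "'a::linorder set"
  assumes "finite T"
  shows "\<exists>\<rho>. \<rho> permutes T \<and> (\<forall>x. \<rho> (\<rho> x) = x) \<and> (\<forall>x\<in>T. \<forall>y\<in>T. x < y \<longrightarrow> \<rho> y < \<rho> x)"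
  using assms
proof (induction "card T" arbitrary: T rule: less_induct)
  case less
  show ?case
  proof (cases "card T \<le> 1")
    case True
    then have "\<forall>x\<in>T. \<forall>y\<in>T. x = y"
      using less.prems card_le_Suc0_iff_eq[of T] by simp
    then show ?thesis
      by (intro exI[of _ id]) (auto simp: permutes_id)
  next
    case False
    define a where "a = Min T"
    define b where "b = Max T"
    define T' where "T' = T - {a, b}"
    have "T \<noteq> {}" using False by auto
    then have ab: "a \<in> T" "b \<in> T" "\<And>z. z \<in> T \<Longrightarrow> a \<le> z \<and> z \<le> b"
      using less.prems by (auto simp: a_def b_def)
    have "a \<noteq> b"
      using False ab less.prems card_le_Suc0_iff_eq[of T] by (metis One_nat_def antisym)
    have T'_inner: "\<And>z. z \<in> T' \<Longrightarrow> a < z \<and> z < b"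
      using ab by (force simp: T'_def)
    have "card T' < card T"
      unfolding T'_def using ab(1) less.prems by (intro psubset_card_mono) auto
    then obtain \<rho>' where \<rho>': "\<rho>' permutes T'" "\<And>x. \<rho>' (\<rho>' x) = x"
        "\<And>x y. x \<in> T' \<Longrightarrow> y \<in> T' \<Longrightarrow> x < y \<Longrightarrow> \<rho>' y < \<rho>' x"
      using less.hyps less.prems T'_def by (metis finite_Diff)
    have \<rho>'_ab: "\<rho>' a = a" "\<rho>' b = b"
      using \<rho>'(1) by (auto simp: T'_def permutes_not_in)
    define \<rho> where "\<rho> = Transposition.transpose a b \<circ> \<rho>'"
    have "\<rho> permutes T"
      unfolding \<rho>_def
      by (rule permutes_compose[OF permutes_subset[OF \<rho>'(1)] permutes_swap_id[OF ab(1,2)]])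
        (auto simp: T'_def)
    moreover have "\<rho> (\<rho> x) = x" for x
    proof (cases "x \<in> T'")
      case True
      then have "\<rho>' x \<in> T'"
        using permutes_in_image[OF \<rho>'(1)] by blast
      then show ?thesis
        using True \<rho>'(2) by (auto simp: \<rho>_def T'_def transpose_apply_other)
    next
      case False
      then have "\<rho>' x = x" "transpose a b x \<notin> T'"
        using \<rho>'(1) by (auto simp: permutes_not_in T'_def transpose_def)
      then show ?thesis
        using \<rho>'(1) by (simp add: \<rho>_def permutes_not_in)
    qed
    moreover have "\<rho> y < \<rho> x" if "x \<in> T" "y \<in> T" "x < y" for x y
    proof -
      have on_T': "\<rho>' z \<in> T'" "\<rho> z = \<rho>' z" if "z \<in> T'" for z
      proof -
        show "\<rho>' z \<in> T'"
          using that permutes_in_image[OF \<rho>'(1)] by blast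
        then show "\<rho> z = \<rho>' z"
          by (auto simp: \<rho>_def T'_def transpose_apply_other)
      qed
      have "\<rho> a = b" "\<rho> b = a"
        using \<rho>'_ab by (auto simp: \<rho>_def)
      moreover have "x = a \<or> x \<in> T'" "y = b \<or> y \<in> T'"
        using that ab(3) by (fastforce simp: T'_def)+
      ultimately show ?thesis
        using \<open>x < y\<close> on_T' T'_inner \<rho>'(3) \<open>a \<noteq> b\<close> by fastforce
    qed
    ultimately show ?thesis by blast
  qed
qed

definition reverse_on :: "'a::linorder set \<Rightarrow> 'a \<Rightarrow> 'a" where
  "reverse_on T = (SOME \<rho>. \<rho> permutes T \<and> (\<forall>x. \<rho> (\<rho> x) = x) \<and>
     (\<forall>x\<in>T. \<forall>y\<in>T. x < y \<longrightarrow> \<rho> y < \<rho> x))"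

lemma reverse_on:
  fixes T :: "'a::linorder set"
  assumes "finite T"
  shows reverse_on_permutes: "reverse_on T permutes T"
    and reverse_on_reverse_on: "reverse_on T (reverse_on T x) = x"
    and reverse_on_strict_antimono: "x \<in> T \<Longrightarrow> y \<in> T \<Longrightarrow> x < y \<Longrightarrow> reverse_on T y < reverse_on T x"
  using someI_ex[OF finite_order_reversing_involution[OF assms]]
  unfolding reverse_on_def[symmetric] by blast+

definition flip_on :: "'a set \<Rightarrow> ('a \<Rightarrow> 'b::linorder) \<Rightarrow> 'a \<Rightarrow> 'b" where
  "flip_on C \<sigma> = reverse_on (\<sigma> ` C) \<circ> \<sigma>"

lemma flip_on_permutes:
  assumes "finite C" "C \<subseteq> S" "\<sigma> permutes S"
  shows "flip_on C \<sigma> permutes S"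
proof -
  have "\<sigma> ` C \<subseteq> S"
    using assms(2) permutes_image[OF assms(3)] by blast
  then show ?thesis
    unfolding flip_on_def using assms(1,3)
    by (intro permutes_compose permutes_subset[OF reverse_on_permutes]) auto
qed

lemma flip_on_flip_on:
  assumes "finite C"
  shows "flip_on C (flip_on C \<sigma>) = \<sigma>"
proof -
  have "flip_on C \<sigma> ` C = \<sigma> ` C"
    unfolding flip_on_def image_comp[symmetric]
    using permutes_image[OF reverse_on_permutes] assms by blast
  then show ?thesis
    using assms by (simp add: flip_on_def fun_eq_iff reverse_on_reverse_on)
qed

lemma flip_on_outside:
  assumes "finite C" "inj \<sigma>" "x \<notin> C"
  shows "flip_on C \<sigma> x = \<sigma> x"
proof -
  have "\<sigma> x \<notin> \<sigma> ` C"
    using assms(2,3) by (simp add: inj_image_mem_iff)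
  then show ?thesis
    using assms(1) by (simp add: flip_on_def permutes_not_in[OF reverse_on_permutes])
qed

definition edge_sign :: "('a::linorder \<Rightarrow> nat) \<Rightarrow> 'a set \<Rightarrow> int" where
  "edge_sign \<sigma> A = sgn (int (\<sigma> (Max A)) - int (\<sigma> (Min A)))"

lemma edge_sign_flip_on_inside:
  assumes "finite C" "inj \<sigma>" "A \<subseteq> C" "card A = 2"
  shows "edge_sign (flip_on C \<sigma>) A = - edge_sign \<sigma> A"
proof -
  define a b where "a = Min A" and "b = Max A"
  obtain x y where "A = {x, y}" "x \<noteq> y"
    using assms(4) by (auto simp: card_2_iff)
  then have "a < b" "a \<in> C" "b \<in> C"
    using assms(3) by (auto simp: a_def b_def min_def max_def)
  then have "\<sigma> a \<in> \<sigma> ` C" "\<sigma> b \<in> \<sigma> ` C" "\<sigma> a \<noteq> \<sigma> b"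
    using assms(2) by (auto dest: injD)
  then have "\<sigma> a < \<sigma> b \<and> reverse_on (\<sigma> ` C) (\<sigma> b) < reverse_on (\<sigma> ` C) (\<sigma> a) \<or>
      \<sigma> b < \<sigma> a \<and> reverse_on (\<sigma> ` C) (\<sigma> a) < reverse_on (\<sigma> ` C) (\<sigma> b)"
    using reverse_on_strict_antimono assms(1) by (meson finite_imageI linorder_neqE_nat)
  then show ?thesis
    by (auto simp: edge_sign_def flip_on_def sgn_if a_def[symmetric] b_def[symmetric])
qed

lemma edge_sign_flip_on_outside:
  assumes "finite C" "inj \<sigma>" "A \<inter> C = {}" "card A = 2"
  shows "edge_sign (flip_on C \<sigma>) A = edge_sign \<sigma> A"
proof -
  obtain x y where "A = {x, y}"
    using assms(4) by (auto simp: card_2_iff)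
  then have "Min A \<notin> C" "Max A \<notin> C"
    using assms(3) by (auto simp: min_def max_def)
  then show ?thesis
    using assms(1,2) by (simp add: edge_sign_def flip_on_outside)
qed

lemma prod_edge_sign_flip_on:
  assumes "finite C" "inj \<sigma>" "finite F" "K \<subseteq> F" "odd (card K)"
    and "\<And>e. e \<in> F \<Longrightarrow> card (s e) = 2"
    and "\<And>e. e \<in> K \<Longrightarrow> s e \<subseteq> C" "\<And>e. e \<in> F - K \<Longrightarrow> s e \<inter> C = {}"
  shows "(\<Prod>e\<in>F. edge_sign (flip_on C \<sigma>) (s e)) = - (\<Prod>e\<in>F. edge_sign \<sigma> (s e))"
proof -
  have "(\<Prod>e\<in>F. edge_sign (flip_on C \<sigma>) (s e))
      = (\<Prod>e\<in>F - K. edge_sign (flip_on C \<sigma>) (s e)) * (\<Prod>e\<in>K. edge_sign (flip_on C \<sigma>) (s e))"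
    by (rule prod.subset_diff[OF assms(4,3)])
  also have "\<dots> = (\<Prod>e\<in>F - K. edge_sign \<sigma> (s e)) * (\<Prod>e\<in>K. - edge_sign \<sigma> (s e))"
    using assms(1,2,4,6-8)
    by (simp add: edge_sign_flip_on_inside edge_sign_flip_on_outside subset_iff)
  also have "\<dots> = - (\<Prod>e\<in>F. edge_sign \<sigma> (s e))"
    using assms(3-5) by (simp add: prod_uminus prod.subset_diff[of K F])
  finally show ?thesis .
qed

lemma component_edges_disjoint:
  assumes "labeled_graph V E s" "e \<in> {1..E} - component_edges V E s v"
  shows "s e \<inter> component V E s v = {}"
proof (rule ccontr)
  assume meets: "s e \<inter> component V E s v \<noteq> {}"
  obtain x y where xy: "s e = {x, y}" "x \<in> {1..V}" "y \<in> {1..V}"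
    using assms unfolding labeled_graph_def by (metis DiffD1 card_2_iff insert_subset)
  then have "adjacent E s x y" "adjacent E s y x"
    using assms(2) unfolding adjacent_def by (auto simp: insert_commute)
  then have "x \<in> component V E s v \<longleftrightarrow> y \<in> component V E s v"
    using xy unfolding component_def by (auto intro: rtranclp.rtrancl_into_rtrancl)
  then have "s e \<subseteq> component V E s v"
    using meets xy by auto
  then show False
    using assms(2) unfolding component_edges_def by auto
qed

theorem lemma5:
  fixes V E :: nat and s :: "nat \<Rightarrow> nat set"
  assumes "labeled_graph V E s"
    and "\<exists>v\<in>{1..V}. odd (card (component_edges V E s v))"
  shows "c_graph V E s = 0"
proof -
  obtain v where odd: "odd (card (component_edges V E s v))"
    using assms(2) by blast
  define C where "C = component V E s v"
  have "finite C"
    unfolding C_def component_def by simp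
  have "C \<subseteq> {1..V}"
    unfolding C_def component_def by blast
  have flip: "(\<Prod>e\<in>{1..E}. edge_sign (flip_on C \<sigma>) (s e)) = - (\<Prod>e\<in>{1..E}. edge_sign \<sigma> (s e))"
    if "\<sigma> permutes {1..V}" for \<sigma>
    using \<open>finite C\<close> permutes_inj[OF that] odd component_edges_disjoint[OF assms(1)] assms(1)
    by (intro prod_edge_sign_flip_on[where K = "component_edges V E s v"])
      (auto simp: C_def component_edges_def labeled_graph_def)
  show ?thesis
    unfolding c_graph_def edge_sign_def[symmetric]
    using flip_on_permutes[OF \<open>finite C\<close> \<open>C \<subseteq> {1..V}\<close>] flip_on_flip_on[OF \<open>finite C\<close>] flip
    by (intro sum_eq_0_by_sign_reversing_involution[where f = "flip_on C"]) auto
qed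

end
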